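(* Let $R$ be a tolerance relation on $X=\{1,\ldots,n\}$ and assume that every $a\in A(R)$ with $a\succeq0$ is of the form $a=\sum_{i=1}^k b_i\star b_i^*$ for some $b_1,\ldots,b_k\in A(R)$. Then the graph of $R$ has a dominant vertex in each connected component.
   Context: A tolerance relation is a reflexive and symmetric relation; its graph has an edge between $i\ne j$ whenever $(i,j)\in R$; a dominant vertex is a vertex adjacent to all other vertices of its connected component. $T(b)=\sum_{(i,j)\in R}E_{ii}bE_{jj}$ for $b\in M_n(\mathbb{C})$, $A(R)=T(M_n(\mathbb{C}))$ with product $a\star b=T(ab)$ and involution the conjugate transpose. For $a\in A(R)$, $a\succeq0$ means $a=T(b)$ for some positive semidefinite $b\in M_n(\mathbb{C})$. *)

theory Defs
  imports "HOL-Analysis.Analysis"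
begin

text \<open>Square complex matrices indexed by a finite type 'n (playing the role of X = {1..n}).\<close>

definition tolerance :: "('n \<times> 'n) set \<Rightarrow> bool" where
  "tolerance R \<longleftrightarrow> (\<forall>i. (i, i) \<in> R) \<and> (\<forall>i j. (i, j) \<in> R \<longrightarrow> (j, i) \<in> R)"

text \<open>T(b) = sum over (i,j) in R of E_ii b E_jj, i.e. entrywise masking.\<close>
definition Tmap :: "('n::finite \<times> 'n) set \<Rightarrow> complex^'n^'n \<Rightarrow> complex^'n^'n" where
  "Tmap R b = (\<chi> i j. if (i, j) \<in> R then b $ i $ j else 0)"

definition AR :: "('n::finite \<times> 'n) set \<Rightarrow> (complex^'n^'n) set" where
  "AR R = Tmap R ` UNIV"

definition star_prod :: "('n::finite \<times> 'n) set \<Rightarrow> complex^'n^'n \<Rightarrow> complex^'n^'n \<Rightarrow> complex^'n^'n" where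
  "star_prod R a b = Tmap R (a ** b)"

definition adjoint_mat :: "complex^'n^'n \<Rightarrow> complex^'n^'n" where
  "adjoint_mat a = (\<chi> i j. cnj (a $ j $ i))"

definition psd :: "complex^'n::finite^'n \<Rightarrow> bool" where
  "psd b \<longleftrightarrow> adjoint_mat b = b \<and>
     (\<forall>x :: complex^'n. 0 \<le> Re (\<Sum>i\<in>UNIV. \<Sum>j\<in>UNIV. cnj (x $ i) * b $ i $ j * x $ j)
                        \<and> Im (\<Sum>i\<in>UNIV. \<Sum>j\<in>UNIV. cnj (x $ i) * b $ i $ j * x $ j) = 0)"

text \<open>a \<succeq> 0 in A(R): a = T(b) for some positive semidefinite b.\<close>
definition AR_pos :: "('n::finite \<times> 'n) set \<Rightarrow> complex^'n^'n \<Rightarrow> bool" where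
  "AR_pos R a \<longleftrightarrow> (\<exists>b. psd b \<and> a = Tmap R b)"

text \<open>Graph of R: edge between i \<noteq> j iff (i,j) \<in> R. Connected component of x: {y. (x,y) \<in> R^*}.
  A vertex v is dominant if it is adjacent to every other vertex of its component.\<close>
definition dominant :: "('n \<times> 'n) set \<Rightarrow> 'n \<Rightarrow> bool" where
  "dominant R v \<longleftrightarrow> (\<forall>w. (v, w) \<in> R\<^sup>* \<longrightarrow> w \<noteq> v \<longrightarrow> (v, w) \<in> R)"

end

theory Submission
  imports Defs
begin

(* Let C be the component of a vertex x and 1_C its indicator vector. The masked rank-one matrix
   a = T(1_C 1_C^* ) is positive in A(R), so a = sum_k T(b_k b_k^* ). Writing P = sum_k b_k b_k^*,
   P_il = 1 on every edge and loop inside C, hence for adjacent i, l in C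
   sum_k |row_i b_k - row_l b_k|^2 = P_ii + P_ll - P_il - P_li = 0,
   so each b_k has the same row at all vertices of C. As P_xx = 1, some entry (b_k)_xj is nonzero,
   hence (b_k)_yj is nonzero for all y in C, and b_k in A(R) forces (y, j) in R: j is dominant. *)

lemma Tmap_nth [simp]: "Tmap R b $ i $ j = (if (i, j) \<in> R then b $ i $ j else 0)"
  by (simp add: Tmap_def)

lemma AR_nth_eq_0: "b \<in> AR R \<Longrightarrow> (i, j) \<notin> R \<Longrightarrow> b $ i $ j = 0"
  by (auto simp: AR_def)

lemma Tmap_sum: "Tmap R (\<Sum>k\<in>A. f k) = (\<Sum>k\<in>A. Tmap R (f k))"
  by (simp add: vec_eq_iff)

lemma sum_star_prod_adjoint:
  "(\<Sum>k<K. star_prod R (bs k) (adjoint_mat (bs k))) = Tmap R (\<Sum>k<K. bs k ** adjoint_mat (bs k))"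
  by (simp add: star_prod_def Tmap_sum)

lemma mult_adjoint_nth: "(b ** adjoint_mat b) $ i $ l = (\<Sum>j\<in>UNIV. b $ i $ j * cnj (b $ l $ j))"
  by (simp add: matrix_matrix_mult_def adjoint_mat_def)

lemma psd_rank_one: "psd (\<chi> i j. v $ i * cnj (v $ j))"
  unfolding psd_def
proof (intro conjI allI)
  show "adjoint_mat (\<chi> i j. v $ i * cnj (v $ j)) = (\<chi> i j. v $ i * cnj (v $ j))"
    by (simp add: adjoint_mat_def vec_eq_iff mult.commute)
next
  fix z :: "complex^'a"
  define w where "w = (\<Sum>i\<in>UNIV. cnj (z $ i) * v $ i)"
  have "(\<Sum>i\<in>UNIV. \<Sum>j\<in>UNIV. cnj (z $ i) * (\<chi> i j. v $ i * cnj (v $ j)) $ i $ j * z $ j) = w * cnj w"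
    by (simp add: w_def sum_product mult_ac)
  also have "\<dots> = complex_of_real ((cmod w)\<^sup>2)"
    by (simp add: complex_mult_cnj cmod_power2)
  finally show "0 \<le> Re (\<Sum>i\<in>UNIV. \<Sum>j\<in>UNIV. cnj (z $ i) * (\<chi> i j. v $ i * cnj (v $ j)) $ i $ j * z $ j)"
    and "Im (\<Sum>i\<in>UNIV. \<Sum>j\<in>UNIV. cnj (z $ i) * (\<chi> i j. v $ i * cnj (v $ j)) $ i $ j * z $ j) = 0"
    by simp_all
qed

lemma gram_rows_eq:
  fixes bs :: "nat \<Rightarrow> complex^'n^'n" and K :: nat
  defines "P \<equiv> (\<Sum>k<K. bs k ** adjoint_mat (bs k))"
  assumes "P $ i $ i + P $ l $ l = P $ i $ l + P $ l $ i" and "k < K"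
  shows "bs k $ i = bs k $ l"
proof -
  let ?d = "\<lambda>k j. bs k $ i $ j - bs k $ l $ j"
  have "complex_of_real (\<Sum>k<K. \<Sum>j\<in>UNIV. (cmod (?d k j))\<^sup>2) = (\<Sum>k<K. \<Sum>j\<in>UNIV. ?d k j * cnj (?d k j))"
    by (simp only: of_real_sum complex_norm_square)
  also have "\<dots> = P $ i $ i + P $ l $ l - P $ i $ l - P $ l $ i"
    by (simp add: P_def mult_adjoint_nth algebra_simps sum_subtractf sum.distrib)
  also have "\<dots> = 0"
    using assms(2) by simp
  finally have "(\<Sum>k<K. \<Sum>j\<in>UNIV. (cmod (?d k j))\<^sup>2) = 0"
    by (simp only: of_real_eq_0_iff)
  then have "(\<Sum>j\<in>UNIV. (cmod (?d k j))\<^sup>2) = 0"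
    using \<open>k < K\<close> by (simp add: sum_nonneg_eq_0_iff sum_nonneg)
  then show ?thesis
    by (simp add: sum_nonneg_eq_0_iff vec_eq_iff)
qed

lemma dominant_if_adjacent_to_component:
  assumes "tolerance R" and "\<And>y. (x, y) \<in> R\<^sup>* \<Longrightarrow> (y, j) \<in> R"
  shows "(x, j) \<in> R\<^sup>* \<and> dominant R j"
proof
  have xj: "(x, j) \<in> R"
    using assms(2) by blast
  then show "(x, j) \<in> R\<^sup>*" ..
  show "dominant R j"
    unfolding dominant_def
  proof (intro allI impI)
    fix w
    assume "(j, w) \<in> R\<^sup>*"
    with xj have "(x, w) \<in> R\<^sup>*"
      by (rule converse_rtrancl_into_rtrancl)
    then have "(w, j) \<in> R"
      by (rule assms(2))
    then show "(j, w) \<in> R"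
      using assms(1) by (simp add: tolerance_def)
  qed
qed

lemma dominant_if_gram_one_on_component:
  fixes bs :: "nat \<Rightarrow> complex^'n::finite^'n" and K :: nat
  defines "P \<equiv> (\<Sum>k<K. bs k ** adjoint_mat (bs k))"
  assumes "tolerance R" and bs_AR: "\<forall>k<K. bs k \<in> AR R"
    and gram_one: "\<And>i l. (x, i) \<in> R\<^sup>* \<Longrightarrow> (i, l) \<in> R \<Longrightarrow> P $ i $ l = 1"
  shows "\<exists>v. (x, v) \<in> R\<^sup>* \<and> dominant R v"
proof -
  have R_refl: "(i, i) \<in> R" and R_sym: "(i, l) \<in> R \<Longrightarrow> (l, i) \<in> R" for i l
    using assms(2) by (auto simp: tolerance_def)
  have row_const: "bs k $ y = bs k $ x" if "(x, y) \<in> R\<^sup>*" "k < K" for y k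
    using that(1)
  proof (induction rule: rtrancl_induct)
    case (step y z)
    have "(x, z) \<in> R\<^sup>*"
      using step.hyps by (rule rtrancl_into_rtrancl)
    then have "P $ y $ y = 1" "P $ z $ z = 1" "P $ y $ z = 1" "P $ z $ y = 1"
      using gram_one R_refl R_sym step.hyps by blast+
    then have "bs k $ y = bs k $ z"
      using gram_rows_eq[where bs = bs and K = K and i = y and l = z] \<open>k < K\<close> unfolding P_def by simp
    then show ?case
      using step.IH by simp
  qed simp
  have "(\<Sum>k<K. \<Sum>j\<in>UNIV. bs k $ x $ j * cnj (bs k $ x $ j)) \<noteq> 0"
    using gram_one[OF rtrancl.rtrancl_refl R_refl] by (simp add: P_def mult_adjoint_nth)
  then obtain k where "k < K" and "(\<Sum>j\<in>UNIV. bs k $ x $ j * cnj (bs k $ x $ j)) \<noteq> 0"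
    by (auto elim: sum.not_neutral_contains_not_neutral)
  then obtain j where nonzero: "bs k $ x $ j \<noteq> 0"
    by (auto elim: sum.not_neutral_contains_not_neutral)
  have "(y, j) \<in> R" if "(x, y) \<in> R\<^sup>*" for y
  proof (rule ccontr)
    assume "(y, j) \<notin> R"
    then have "bs k $ y $ j = 0"
      using AR_nth_eq_0 bs_AR \<open>k < K\<close> by blast
    then show False
      using row_const[OF that \<open>k < K\<close>] nonzero by simp
  qed
  then show ?thesis
    using dominant_if_adjacent_to_component[OF assms(2)] by blast
qed

theorem proposition4p15:
  fixes R :: "('n::finite \<times> 'n) set"
  assumes "tolerance R"
    and "\<forall>a \<in> AR R. AR_pos R a \<longrightarrow>
           (\<exists>(k::nat) bs. (\<forall>i<k. bs i \<in> AR R) \<and>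
                   a = (\<Sum>i<k. star_prod R (bs i) (adjoint_mat (bs i))))"
  shows "\<forall>x. \<exists>v. (x, v) \<in> R\<^sup>* \<and> dominant R v"
proof
  fix x
  define v :: "complex^'n" where "v = (\<chi> i. if (x, i) \<in> R\<^sup>* then 1 else 0)"
  define a where "a = Tmap R (\<chi> i j. v $ i * cnj (v $ j))"
  have "a \<in> AR R" and "AR_pos R a"
    unfolding a_def AR_def AR_pos_def using psd_rank_one by blast+
  with assms(2) obtain K and bs :: "nat \<Rightarrow> complex^'n^'n" where bs_AR: "\<forall>k<K. bs k \<in> AR R"
    and a_eq: "a = Tmap R (\<Sum>k<K. bs k ** adjoint_mat (bs k))"
    by (auto simp: sum_star_prod_adjoint)
  have "(\<Sum>k<K. bs k ** adjoint_mat (bs k)) $ i $ l = 1" if "(x, i) \<in> R\<^sup>*" "(i, l) \<in> R" for i l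
  proof -
    have "a $ i $ l = 1"
      using that by (simp add: a_def v_def rtrancl_into_rtrancl)
    then show ?thesis
      using that(2) by (simp add: a_eq)
  qed
  then show "\<exists>v. (x, v) \<in> R\<^sup>* \<and> dominant R v"
    using dominant_if_gram_one_on_component[OF assms(1) bs_AR] by blast
qed

end
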